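(* For any integer $m\ge 1$ and all $z,\xi\in\mathbb{B}_N$, $$\big(|E_\xi+m|^2-\Delta_\xi\big)\cdots\big(|E_\xi+1|^2-\Delta_\xi\big)\big(|E_\xi|^2-\Delta_\xi\big)\Big\{\frac{1}{|1-\langle z,\xi\rangle|^2}\Big\}=|E_z|^2\Big\{\frac{(m!)^2(1-|z|^2)^{m+1}}{|1-\langle z,\xi\rangle|^{2(m+1)}}\Big\},$$ and $$\big(|E_\xi+m|^2-\Delta_\xi\big)\cdots\big(|E_\xi|^2-\Delta_\xi\big)\Big\{\frac{1-|\xi|^2}{|1-\langle z,\xi\rangle|^2}\Big\}=\big(|E_z|^2-\Delta_z\big)\Big\{\frac{(m!)^2(1-|z|^2)^{m+1}}{|1-\langle z,\xi\rangle|^{2(m+1)}}\Big\}.$$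
   Context: $\mathbb{B}_N$ is the unit ball of $\mathbb{C}^N$ and $\langle z,\xi\rangle=\sum_j z_j\bar\xi_j$. The operators are $E_z=\sum_{j=1}^N z_j\partial/\partial z_j$, $\bar E_z=\sum_{j=1}^N\bar z_j\partial/\partial\bar z_j$, $\Delta_z=\sum_{j=1}^N\partial^2/\partial z_j\partial\bar z_j$, and for a real number $s$, $|E_z+s|^2=(E_z+s)(\bar E_z+s)$; subscripts $\xi$ denote the same operators acting in the variable $\xi$. Products of operators denote composition. *)

theory Defs
  imports "HOL-Analysis.Analysis"
begin

text \<open>Points of C^N are vectors complex^'n (N = CARD('n)). Functions are complex valued.
 Real directional derivative via the Frechet derivative (C^N viewed as a real vector space).\<close>

definition dirD :: "(complex^'n \<Rightarrow> complex) \<Rightarrow> complex^'n \<Rightarrow> complex^'n \<Rightarrow> complex" where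
  "dirD f v z = frechet_derivative f (at z) v"

definition dz :: "'n \<Rightarrow> (complex^'n \<Rightarrow> complex) \<Rightarrow> complex^'n \<Rightarrow> complex" where
  "dz j f = (\<lambda>z. (dirD f (axis j 1) z - \<i> * dirD f (axis j \<i>) z) / 2)"

definition dzb :: "'n \<Rightarrow> (complex^'n \<Rightarrow> complex) \<Rightarrow> complex^'n \<Rightarrow> complex" where
  "dzb j f = (\<lambda>z. (dirD f (axis j 1) z + \<i> * dirD f (axis j \<i>) z) / 2)"

definition cinner :: "complex^'n \<Rightarrow> complex^'n \<Rightarrow> complex" where
  "cinner z w = (\<Sum>j\<in>UNIV. z $ j * cnj (w $ j))"

definition Eop :: "(complex^'n::finite \<Rightarrow> complex) \<Rightarrow> complex^'n \<Rightarrow> complex" where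
  "Eop f = (\<lambda>z. \<Sum>j\<in>UNIV. z $ j * dz j f z)"

definition Ebop :: "(complex^'n::finite \<Rightarrow> complex) \<Rightarrow> complex^'n \<Rightarrow> complex" where
  "Ebop f = (\<lambda>z. \<Sum>j\<in>UNIV. cnj (z $ j) * dzb j f z)"

definition Lapop :: "(complex^'n::finite \<Rightarrow> complex) \<Rightarrow> complex^'n \<Rightarrow> complex" where
  "Lapop f = (\<lambda>z. \<Sum>j\<in>UNIV. dz j (dzb j f) z)"

text \<open>|E+s|^2 = (E+s)(Ebar+s)\<close>
definition absE2 :: "real \<Rightarrow> (complex^'n::finite \<Rightarrow> complex) \<Rightarrow> complex^'n \<Rightarrow> complex" where
  "absE2 s f = (let g = (\<lambda>z. Ebop f z + of_real s * f z) in (\<lambda>z. Eop g z + of_real s * g z))"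

definition Lop :: "real \<Rightarrow> (complex^'n::finite \<Rightarrow> complex) \<Rightarrow> complex^'n \<Rightarrow> complex" where
  "Lop s f = (\<lambda>z. absE2 s f z - Lapop f z)"

text \<open>(|E+m|^2-Delta) ... (|E+1|^2-Delta)(|E|^2-Delta), composition, L_0 applied first.\<close>
primrec Lprod :: "nat \<Rightarrow> (complex^'n::finite \<Rightarrow> complex) \<Rightarrow> complex^'n \<Rightarrow> complex" where
  "Lprod 0 f = Lop 0 f"
| "Lprod (Suc k) f = Lop (real (Suc k)) (Lprod k f)"

end

theory Submission
  imports Defs
begin

text \<open>
  Fix the pole \<open>z\<close> and write \<open>X = 1/(1 - <w,z>)\<close>, \<open>Y = 1/(1 - <z,w>)\<close>, \<open>S = |w|\<^sup>2\<close>.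
  Since \<open>X\<close> is holomorphic and \<open>Y\<close> antiholomorphic in \<open>w\<close>, with \<open>E X = X\<^sup>2 - X\<close> and
  \<open>Ebar Y = Y\<^sup>2 - Y\<close>, the operators \<open>E\<close>, \<open>Ebar\<close> and \<open>\<Delta>\<close> act on functions of \<open>(X, Y, S)\<close> as
  explicit differential operators in these three variables. Both kernels \<open>1/|1 - <z,w>|\<^sup>2 = X Y\<close> and
  \<open>(1 - |w|\<^sup>2)/|1 - <z,w>|\<^sup>2 = X Y (1 - S)\<close> are polynomials in \<open>X\<close>, \<open>Y\<close>, \<open>1 - S\<close>, and
  \<open>|E + n|\<^sup>2 - \<Delta>\<close> maps the span of \<open>X\<^sup>n Y\<^sup>n {XY, X, Y, 1, (1 - S) XY}\<close> to the same span with
  \<open>n + 1\<close> in place of \<open>n\<close>, by an explicit linear recurrence on the five coefficients whose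
  solution is found in closed form. The right-hand sides are \<open>(m!)\<^sup>2 X\<^sup>m\<^sup>+\<^sup>1 Y\<^sup>m\<^sup>+\<^sup>1 (1 - S)\<^sup>m\<^sup>+\<^sup>1\<close> in
  the coordinates with pole \<open>\<xi>\<close>; evaluating the same calculus there at \<open>w = z\<close>, where the
  roles of \<open>X\<close> and \<open>Y\<close> are exchanged, gives the same polynomials at \<open>w = \<xi>\<close>.
\<close>

lemma has_derivative_vec_nth: "((\<lambda>w. w $ j) has_derivative (\<lambda>h. h $ j)) F"
  by (rule bounded_linear.has_derivative[OF bounded_linear_vec_nth has_derivative_ident])

lemma cnj_cinner: "cnj (cinner z w) = cinner w z"
  unfolding cinner_def by (simp add: mult.commute)

lemma cinner_axis_left: "cinner (axis j c) z = c * cnj (z $ j)"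
proof -
  have "cinner (axis j c) z = (\<Sum>i\<in>UNIV. if i = j then c * cnj (z $ j) else 0)"
    unfolding cinner_def axis_def by (rule sum.cong) auto
  then show ?thesis by simp
qed

lemma cinner_axis_right: "cinner z (axis j c) = z $ j * cnj c"
proof -
  have "cinner z (axis j c) = (\<Sum>i\<in>UNIV. if i = j then z $ j * cnj c else 0)"
    unfolding cinner_def axis_def by (rule sum.cong) auto
  then show ?thesis by simp
qed

lemma axis_nth_if: "axis j c $ k = (if k = j then c else 0)"
  unfolding axis_def by simp

lemma has_derivative_cinner_left: "((\<lambda>w. cinner w z) has_derivative (\<lambda>h. cinner h z)) F"
  unfolding cinner_def by (intro has_derivative_sum has_derivative_mult_left has_derivative_vec_nth)

lemma has_derivative_cinner_right: "((\<lambda>w. cinner z w) has_derivative (\<lambda>h. cinner z h)) F"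
  unfolding cinner_def
  by (intro has_derivative_sum has_derivative_mult_right
      bounded_linear.has_derivative[OF bounded_linear_cnj has_derivative_vec_nth])

lemma has_derivative_cinner_self:
  "((\<lambda>w. cinner w w) has_derivative (\<lambda>h. cinner h w + cinner w h)) (at w)"
  unfolding cinner_def
  by (rule derivative_eq_intros has_derivative_vec_nth
      bounded_linear.has_derivative[OF bounded_linear_cnj has_derivative_vec_nth] refl)+
    (simp add: sum.distrib algebra_simps)

lemma of_real_norm_power2_eq_cinner: "(complex_of_real (norm w))\<^sup>2 = cinner w w"
proof -
  have "(norm w)\<^sup>2 = (\<Sum>i\<in>UNIV. (cmod (w $ i))\<^sup>2)"
    unfolding norm_vec_def L2_set_def by (simp add: sum_nonneg)
  then show ?thesis
    unfolding cinner_def of_real_power[symmetric] by (simp only: of_real_sum complex_norm_square)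
qed

lemma norm_cinner_le: "cmod (cinner x z) \<le> norm x * norm z"
proof -
  have "cmod (cinner x z) \<le> (\<Sum>i\<in>UNIV. \<bar>cmod (x $ i)\<bar> * \<bar>cmod (z $ i)\<bar>)"
    unfolding cinner_def by (rule order_trans[OF norm_sum]) (simp add: norm_mult)
  also have "\<dots> \<le> norm x * norm z"
    unfolding norm_vec_def by (rule L2_set_mult_ineq)
  finally show ?thesis .
qed

lemma cinner_neq_1:
  assumes "norm x < 1" "norm z < 1"
  shows "cinner x z \<noteq> 1"
proof -
  have "cmod (cinner x z) < 1"
    using norm_cinner_le[of x z] mult_strict_mono'[OF assms norm_ge_zero norm_ge_zero] by simp
  then show ?thesis by auto
qed

lemma of_real_cmod_one_minus_cinner_power2:
  "(complex_of_real (cmod (1 - cinner z w)))\<^sup>2 = (1 - cinner z w) * (1 - cinner w z)"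
  using complex_norm_square[of "1 - cinner z w"] cnj_cinner[of z w] by simp

lemma dz_dzb_eq_has_derivative:
  assumes "open U" "w \<in> U" "\<And>x. x \<in> U \<Longrightarrow> f x = g x" "(g has_derivative g') (at w)"
  shows "dz j f w = (g' (axis j 1) - \<i> * g' (axis j \<i>)) / 2"
    and "dzb j f w = (g' (axis j 1) + \<i> * g' (axis j \<i>)) / 2"
proof -
  have "(f has_derivative g') (at w)"
    using assms by (metis has_derivative_transform_within_open)
  then have "frechet_derivative f (at w) = g'"
    by (metis frechet_derivative_at)
  then show "dz j f w = (g' (axis j 1) - \<i> * g' (axis j \<i>)) / 2"
    and "dzb j f w = (g' (axis j 1) + \<i> * g' (axis j \<i>)) / 2"
    unfolding dz_def dzb_def dirD_def by simp_all
qed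

definition kerX :: "complex^'n::finite \<Rightarrow> complex^'n \<Rightarrow> complex" where
  "kerX z w = 1 / (1 - cinner w z)"

definition kerY :: "complex^'n::finite \<Rightarrow> complex^'n \<Rightarrow> complex" where
  "kerY z w = 1 / (1 - cinner z w)"

definition ker_coords :: "complex^'n::finite \<Rightarrow> complex^'n \<Rightarrow> complex \<times> complex \<times> complex" where
  "ker_coords z w = (kerX z w, kerY z w, cinner w w)"

lemma kerX_power2_cinner: "cinner w z \<noteq> 1 \<Longrightarrow> kerX z w ^ 2 * cinner w z = kerX z w ^ 2 - kerX z w"
  unfolding kerX_def by (simp add: power2_eq_square divide_simps)

lemma kerY_power2_cinner:
  assumes "cinner w z \<noteq> 1"
  shows "kerY z w ^ 2 * cinner z w = kerY z w ^ 2 - kerY z w"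
proof -
  have "cinner z w \<noteq> 1"
    using assms cnj_cinner[of z w] by auto
  then show ?thesis
    unfolding kerY_def by (simp add: power2_eq_square divide_simps)
qed

lemma open_cinner_neq_1: "open {x. cinner x z \<noteq> 1}"
  by (intro open_Collect_neq continuous_on_const continuous_at_imp_continuous_on ballI
      has_derivative_continuous[OF has_derivative_cinner_left])

lemma has_derivative_ker_coords:
  assumes "cinner w z \<noteq> 1"
  shows "(ker_coords z has_derivative
           (\<lambda>h. (kerX z w ^ 2 * cinner h z, kerY z w ^ 2 * cinner z h, cinner h w + cinner w h))) (at w)"
proof -
  have "1 - cinner w z \<noteq> 0" "1 - cinner z w \<noteq> 0"
    using assms cnj_cinner[of z w] by auto
  then show ?thesis
    unfolding ker_coords_def kerX_def kerY_def
    by (intro has_derivative_Pair has_derivative_cinner_self has_derivative_eq_rhs[OF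
          has_derivative_divide[OF has_derivative_const has_derivative_diff[OF has_derivative_const]]])
      (auto simp: field_simps power2_eq_square intro: has_derivative_cinner_left has_derivative_cinner_right)
qed

text \<open>The extra factor \<open>x $ k\<close> makes room for \<open>dzb j f\<close>, which contains \<open>w $ j\<close>, so that
  \<open>dz j (dzb j f)\<close> and hence the Laplacian can be computed.\<close>

lemma dz_dzb_comp_ker_coords_coord_mult:
  fixes z w :: "complex^'n::finite"
  assumes w: "cinner w z \<noteq> 1"
    and f: "\<And>x. cinner x z \<noteq> 1 \<Longrightarrow> f x = F (ker_coords z x) + x $ k * G (ker_coords z x)"
    and F: "(F has_derivative (\<lambda>h. Fx * fst h + Fy * fst (snd h) + Fs * snd (snd h))) (at (ker_coords z w))"
    and G: "(G has_derivative (\<lambda>h. Gx * fst h + Gy * fst (snd h) + Gs * snd (snd h))) (at (ker_coords z w))"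
  shows "dz j f w = kerX z w ^ 2 * cnj (z $ j) * (Fx + w $ k * Gx) + cnj (w $ j) * (Fs + w $ k * Gs)
                    + (if j = k then G (ker_coords z w) else 0)"
    and "dzb j f w = kerY z w ^ 2 * z $ j * (Fy + w $ k * Gy) + w $ j * (Fs + w $ k * Gs)"
proof -
  note coords = has_derivative_ker_coords[OF w]
  note g = has_derivative_add[OF diff_chain_at[OF coords F]
      has_derivative_mult[OF has_derivative_vec_nth diff_chain_at[OF coords G]]]
  have "w \<in> {x. cinner x z \<noteq> 1}" using w by simp
  note D = dz_dzb_eq_has_derivative[OF open_cinner_neq_1 this _ g]
  show "dz j f w = kerX z w ^ 2 * cnj (z $ j) * (Fx + w $ k * Gx) + cnj (w $ j) * (Fs + w $ k * Gs)
                    + (if j = k then G (ker_coords z w) else 0)"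
    by (subst D) (auto simp: f cinner_axis_left cinner_axis_right axis_nth_if field_simps)
  show "dzb j f w = kerY z w ^ 2 * z $ j * (Fy + w $ k * Gy) + w $ j * (Fs + w $ k * Gs)"
    by (subst D) (auto simp: f cinner_axis_left cinner_axis_right axis_nth_if field_simps)
qed

lemma dz_dzb_comp_ker_coords:
  fixes z w :: "complex^'n::finite"
  assumes w: "cinner w z \<noteq> 1"
    and f: "\<And>x. cinner x z \<noteq> 1 \<Longrightarrow> f x = F (ker_coords z x)"
    and F: "(F has_derivative (\<lambda>h. Fx * fst h + Fy * fst (snd h) + Fs * snd (snd h))) (at (ker_coords z w))"
  shows "dz j f w = kerX z w ^ 2 * cnj (z $ j) * Fx + cnj (w $ j) * Fs"
    and "dzb j f w = kerY z w ^ 2 * z $ j * Fy + w $ j * Fs"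
  using dz_dzb_comp_ker_coords_coord_mult[OF w _ F, where G = "\<lambda>_. 0" and Gx = 0 and Gy = 0 and Gs = 0]
  by (simp_all add: f)

lemma Eop_Ebop_comp_ker_coords:
  fixes z w :: "complex^'n::finite"
  assumes w: "cinner w z \<noteq> 1"
    and f: "\<And>x. cinner x z \<noteq> 1 \<Longrightarrow> f x = F (ker_coords z x)"
    and F: "(F has_derivative (\<lambda>h. Fx * fst h + Fy * fst (snd h) + Fs * snd (snd h))) (at (ker_coords z w))"
  shows "Eop f w = (kerX z w ^ 2 - kerX z w) * Fx + cinner w w * Fs"
    and "Ebop f w = (kerY z w ^ 2 - kerY z w) * Fy + cinner w w * Fs"
proof -
  note D = dz_dzb_comp_ker_coords[OF w f F]
  have "Eop f w = kerX z w ^ 2 * cinner w z * Fx + cinner w w * Fs"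
    unfolding Eop_def cinner_def by (simp add: D sum_distrib_left sum_distrib_right sum.distrib algebra_simps)
  then show "Eop f w = (kerX z w ^ 2 - kerX z w) * Fx + cinner w w * Fs"
    by (simp add: kerX_power2_cinner[OF w])
  have "Ebop f w = kerY z w ^ 2 * cinner z w * Fy + cinner w w * Fs"
    unfolding Ebop_def cinner_def by (simp add: D sum_distrib_left sum_distrib_right sum.distrib algebra_simps)
  then show "Ebop f w = (kerY z w ^ 2 - kerY z w) * Fy + cinner w w * Fs"
    by (simp add: kerY_power2_cinner[OF w])
qed

text \<open>A coefficient list \<open>[((a, b, e), c), \<dots>]\<close> stands for the polynomial \<open>\<Sum> c X\<^sup>a Y\<^sup>b (1 - S)\<^sup>e\<close>
  evaluated at \<open>(X, Y, S)\<close>; \<open>dX\<close>, \<open>dY\<close>, \<open>dS\<close> are its partial derivatives (an exponent \<open>a - 1\<close>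
  truncated at \<open>0\<close> comes with the coefficient factor \<open>a = 0\<close>).\<close>

type_synonym coeffs = "((nat \<times> nat \<times> nat) \<times> complex) list"

fun xyt_eval :: "coeffs \<Rightarrow> complex \<times> complex \<times> complex \<Rightarrow> complex" where
  "xyt_eval [] p = 0"
| "xyt_eval (((a, b, e), c) # cs) p =
     c * fst p ^ a * fst (snd p) ^ b * (1 - snd (snd p)) ^ e + xyt_eval cs p"

definition dX :: "coeffs \<Rightarrow> coeffs" where
  "dX = map (\<lambda>((a, b, e), c). ((a - 1, b, e), of_nat a * c))"

definition dY :: "coeffs \<Rightarrow> coeffs" where
  "dY = map (\<lambda>((a, b, e), c). ((a, b - 1, e), of_nat b * c))"

definition dS :: "coeffs \<Rightarrow> coeffs" where
  "dS = map (\<lambda>((a, b, e), c). ((a, b, e - 1), - (of_nat e * c)))"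

lemma has_derivative_xyt_eval:
  "(xyt_eval cs has_derivative (\<lambda>h. xyt_eval (dX cs) p * fst h + xyt_eval (dY cs) p * fst (snd h)
                                    + xyt_eval (dS cs) p * snd (snd h))) (at p)"
proof (induction cs p rule: xyt_eval.induct)
  case (1 p)
  show ?case by (simp add: dX_def dY_def dS_def)
next
  case (2 a b e c cs p)
  have "xyt_eval (((a, b, e), c) # cs) =
      (\<lambda>q. c * fst q ^ a * fst (snd q) ^ b * (1 - snd (snd q)) ^ e + xyt_eval cs q)"
    by auto
  then show ?case
    by (simp only:) (rule has_derivative_eq_rhs, (rule derivative_eq_intros 2 refl)+,
        simp add: dX_def dY_def dS_def algebra_simps)
qed

text \<open>In the coordinates \<open>ker_coords z\<close>, \<open>E\<close> acts as \<open>(X\<^sup>2 - X) \<partial>\<^sub>X + S \<partial>\<^sub>S\<close> and \<open>Ebar\<close> as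
  \<open>(Y\<^sup>2 - Y) \<partial>\<^sub>Y + S \<partial>\<^sub>S\<close>; the two symbols are \<open>(E + s)(Ebar + s)\<close> and \<open>\<Delta>\<close> expanded on a
  polynomial, with \<open>c = |z|\<^sup>2\<close> and \<open>N\<close> the dimension.\<close>

fun absE2_symbol :: "real \<Rightarrow> coeffs \<Rightarrow> complex \<times> complex \<times> complex \<Rightarrow> complex" where
  "absE2_symbol s cs (X, Y, S) =
     (let P = (\<lambda>ds. xyt_eval ds (X, Y, S)) in
        (X\<^sup>2 - X) * ((Y\<^sup>2 - Y) * P (dX (dY cs)) + S * P (dX (dS cs)) + of_real s * P (dX cs))
      + S * ((Y\<^sup>2 - Y) * P (dS (dY cs)) + P (dS cs) + S * P (dS (dS cs)) + of_real s * P (dS cs))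
      + of_real s * ((Y\<^sup>2 - Y) * P (dY cs) + S * P (dS cs) + of_real s * P cs))"

fun Lap_symbol :: "complex \<Rightarrow> complex \<Rightarrow> coeffs \<Rightarrow> complex \<times> complex \<times> complex \<Rightarrow> complex" where
  "Lap_symbol c N cs (X, Y, S) =
     (let P = (\<lambda>ds. xyt_eval ds (X, Y, S)) in
        c * X\<^sup>2 * Y\<^sup>2 * P (dX (dY cs)) + (Y\<^sup>2 - Y) * P (dS (dY cs)) + (X\<^sup>2 - X) * P (dX (dS cs))
      + S * P (dS (dS cs)) + N * P (dS cs))"

lemma absE2_ker_coords:
  fixes z w :: "complex^'n::finite"
  assumes f: "\<And>x. cinner x z \<noteq> 1 \<Longrightarrow> f x = xyt_eval cs (ker_coords z x)"
    and w: "cinner w z \<noteq> 1"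
  shows "absE2 s f w = absE2_symbol s cs (ker_coords z w)"
proof -
  obtain X Y S where coords_w: "ker_coords z w = (X, Y, S)"
    by (metis prod_cases3)
  define P where "P ds = xyt_eval ds (X, Y, S)" for ds
  define \<Psi> where "\<Psi> p = ((fst (snd p))\<^sup>2 - fst (snd p)) * xyt_eval (dY cs) p
                            + snd (snd p) * xyt_eval (dS cs) p + of_real s * xyt_eval cs p" for p
  have Ebop_\<Psi>: "Ebop f x + of_real s * f x = \<Psi> (ker_coords z x)" if "cinner x z \<noteq> 1" for x
    using Eop_Ebop_comp_ker_coords(2)[OF that f has_derivative_xyt_eval] f[OF that]
    by (simp add: \<Psi>_def ker_coords_def)
  have \<Psi>_deriv: "(\<Psi> has_derivative (\<lambda>h.
        ((Y\<^sup>2 - Y) * P (dX (dY cs)) + S * P (dX (dS cs)) + of_real s * P (dX cs)) * fst h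
      + ((2 * Y - 1) * P (dY cs) + (Y\<^sup>2 - Y) * P (dY (dY cs)) + S * P (dY (dS cs))
          + of_real s * P (dY cs)) * fst (snd h)
      + ((Y\<^sup>2 - Y) * P (dS (dY cs)) + P (dS cs) + S * P (dS (dS cs))
          + of_real s * P (dS cs)) * snd (snd h))) (at (ker_coords z w))"
    unfolding coords_w \<Psi>_def P_def
    by (rule has_derivative_eq_rhs, (rule derivative_eq_intros has_derivative_xyt_eval refl)+)
      (simp add: algebra_simps power2_eq_square)
  have "absE2 s f w = Eop (\<lambda>x. Ebop f x + of_real s * f x) w + of_real s * (Ebop f w + of_real s * f w)"
    unfolding absE2_def Let_def by simp
  also have "Eop (\<lambda>x. Ebop f x + of_real s * f x) w =
      (X\<^sup>2 - X) * ((Y\<^sup>2 - Y) * P (dX (dY cs)) + S * P (dX (dS cs)) + of_real s * P (dX cs))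
    + S * ((Y\<^sup>2 - Y) * P (dS (dY cs)) + P (dS cs) + S * P (dS (dS cs)) + of_real s * P (dS cs))"
    using Eop_Ebop_comp_ker_coords(1)[OF w Ebop_\<Psi> \<Psi>_deriv] coords_w by (simp add: ker_coords_def)
  also have "Ebop f w + of_real s * f w = \<Psi> (X, Y, S)"
    using Ebop_\<Psi>[OF w] coords_w by simp
  finally show ?thesis
    by (simp add: coords_w \<Psi>_def P_def Let_def)
qed

lemma dz_dzb_xyt_eval_ker_coords:
  fixes z w :: "complex^'n::finite"
  assumes f: "\<And>x. cinner x z \<noteq> 1 \<Longrightarrow> f x = xyt_eval cs (ker_coords z x)"
    and w: "cinner w z \<noteq> 1"
  defines "P ds \<equiv> xyt_eval ds (ker_coords z w)"
  shows "dz j (dzb j f) w =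
      (kerX z w)\<^sup>2 * cnj (z $ j) * ((kerY z w)\<^sup>2 * z $ j * P (dX (dY cs)) + w $ j * P (dX (dS cs)))
    + cnj (w $ j) * ((kerY z w)\<^sup>2 * z $ j * P (dS (dY cs)) + w $ j * P (dS (dS cs))) + P (dS cs)"
proof -
  obtain X Y S where coords_w: "ker_coords z w = (X, Y, S)"
    by (metis prod_cases3)
  have "dzb j f x = (fst (snd (ker_coords z x)))\<^sup>2 * z $ j * xyt_eval (dY cs) (ker_coords z x)
                    + x $ j * xyt_eval (dS cs) (ker_coords z x)" if "cinner x z \<noteq> 1" for x
    using dz_dzb_comp_ker_coords(2)[OF that f has_derivative_xyt_eval] by (simp add: ker_coords_def)
  moreover have "((\<lambda>p. (fst (snd p))\<^sup>2 * z $ j * xyt_eval (dY cs) p) has_derivative (\<lambda>h.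
        Y\<^sup>2 * z $ j * P (dX (dY cs)) * fst h
      + (2 * Y * z $ j * P (dY cs) + Y\<^sup>2 * z $ j * P (dY (dY cs))) * fst (snd h)
      + Y\<^sup>2 * z $ j * P (dS (dY cs)) * snd (snd h))) (at (ker_coords z w))"
    unfolding P_def coords_w
    by (rule has_derivative_eq_rhs, (rule derivative_eq_intros has_derivative_xyt_eval refl)+)
      (simp add: algebra_simps)
  moreover have "kerY z w = Y"
    using coords_w by (simp add: ker_coords_def)
  ultimately show ?thesis
    using dz_dzb_comp_ker_coords_coord_mult(1)[OF w _ _ has_derivative_xyt_eval] by (simp add: P_def)
qed

lemma Lapop_ker_coords:
  fixes z w :: "complex^'n::finite"
  assumes f: "\<And>x. cinner x z \<noteq> 1 \<Longrightarrow> f x = xyt_eval cs (ker_coords z x)"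
    and w: "cinner w z \<noteq> 1"
  shows "Lapop f w = Lap_symbol (cinner z z) (of_nat CARD('n)) cs (ker_coords z w)"
proof -
  define P where "P ds = xyt_eval ds (ker_coords z w)" for ds
  have "Lapop f w = cinner z z * (kerX z w)\<^sup>2 * (kerY z w)\<^sup>2 * P (dX (dY cs))
      + (kerX z w)\<^sup>2 * cinner w z * P (dX (dS cs)) + (kerY z w)\<^sup>2 * cinner z w * P (dS (dY cs))
      + cinner w w * P (dS (dS cs)) + of_nat CARD('n) * P (dS cs)"
    by (simp add: Lapop_def dz_dzb_xyt_eval_ker_coords[OF f w, simplified, folded P_def] cinner_def
        sum.distrib sum_distrib_left sum_distrib_right algebra_simps)
  then show ?thesis
    unfolding kerX_power2_cinner[OF w] kerY_power2_cinner[OF w]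
    by (simp add: P_def ker_coords_def Let_def)
qed

fun stage :: "nat \<Rightarrow> complex \<times> complex \<times> complex \<times> complex \<times> complex \<Rightarrow> coeffs" where
  "stage n (a11, a10, a01, a00, b) =
     [((n + 1, n + 1, 0), a11), ((n + 1, n, 0), a10), ((n, n + 1, 0), a01), ((n, n, 0), a00),
      ((n + 1, n + 1, 1), b)]"

fun stage_step :: "complex \<Rightarrow> complex \<Rightarrow> nat \<Rightarrow> complex \<times> complex \<times> complex \<times> complex \<times> complex
                     \<Rightarrow> complex \<times> complex \<times> complex \<times> complex \<times> complex" where
  "stage_step T N n (a11, a10, a01, a00, b) =
     (of_nat ((n + 1)\<^sup>2) * T * a11,
      of_nat (n * (n + 1)) * T * a10 - of_nat (n + 1) * a11,
      of_nat (n * (n + 1)) * T * a01 - of_nat (n + 1) * a11,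
      of_nat (n\<^sup>2) * T * a00 - of_nat n * (a10 + a01) + a11 + (N - of_nat (2 * n + 1)) * b,
      of_nat ((n + 1)\<^sup>2) * T * b)"

lemma Lop_symbol_stage:
  "absE2_symbol (real n) (stage n C) p - Lap_symbol c N (stage n C) p
     = xyt_eval (stage (Suc n) (stage_step (1 - c) N n C)) p"
proof -
  obtain a11 a10 a01 a00 b where C: "C = (a11, a10, a01, a00, b)"
    by (metis prod_cases5)
  obtain X Y S where p: "p = (X, Y, S)"
    by (metis prod_cases3)
  show ?thesis
    by (cases n) (simp_all add: C p dX_def dY_def dS_def Let_def algebra_simps power2_eq_square)
qed

lemma Lop_ker_coords:
  fixes z w :: "complex^'n::finite"
  assumes f: "\<And>x. cinner x z \<noteq> 1 \<Longrightarrow> f x = xyt_eval cs (ker_coords z x)"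
    and w: "cinner w z \<noteq> 1"
  shows "Lop s f w = absE2_symbol s cs (ker_coords z w)
                     - Lap_symbol (cinner z z) (of_nat CARD('n)) cs (ker_coords z w)"
  by (simp add: Lop_def absE2_ker_coords[OF f w] Lapop_ker_coords[OF f w])

lemma Lprod_stage:
  fixes z w :: "complex^'n::finite"
  assumes f: "\<And>x. cinner x z \<noteq> 1 \<Longrightarrow> f x = xyt_eval (stage 0 C0) (ker_coords z x)"
    and C_0: "C 0 = stage_step (1 - cinner z z) (of_nat CARD('n)) 0 C0"
    and C_Suc: "\<And>k. C (Suc k) = stage_step (1 - cinner z z) (of_nat CARD('n)) (Suc k) (C k)"
    and w: "cinner w z \<noteq> 1"
  shows "Lprod k f w = xyt_eval (stage (Suc k) (C k)) (ker_coords z w)"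
  using w
proof (induction k arbitrary: w)
  case 0
  then show ?case
    using Lop_ker_coords[OF f, of w 0] Lop_symbol_stage[of 0] by (simp add: C_0)
next
  case (Suc k)
  have "Lprod (Suc k) f w = Lop (real (Suc k)) (Lprod k f) w"
    by simp
  also have "\<dots> = xyt_eval (stage (Suc (Suc k))
      (stage_step (1 - cinner z z) (of_nat CARD('n)) (Suc k) (C k))) (ker_coords z w)"
    using Lop_ker_coords[OF Suc.IH Suc.prems] Lop_symbol_stage by metis
  finally show ?case
    by (simp add: C_Suc)
qed

text \<open>\<open>k T\<^sup>k\<^sup>-\<^sup>1 + T\<^sup>k\<close> is \<open>(k + T) T\<^sup>k\<^sup>-\<^sup>1\<close>, written so that \<open>k = 0\<close> needs no division by \<open>T\<close>.\<close>

definition kernel_coeffs :: "complex \<Rightarrow> nat \<Rightarrow> complex \<times> complex \<times> complex \<times> complex \<times> complex" where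
  "kernel_coeffs T k =
     ((fact (Suc k))\<^sup>2 * T ^ Suc k, - (fact (Suc k))\<^sup>2 * T ^ k, - (fact (Suc k))\<^sup>2 * T ^ k,
      (fact k)\<^sup>2 * of_nat (Suc k) * (of_nat k * T ^ (k - 1) + T ^ k), 0)"

definition weighted_kernel_coeffs ::
    "complex \<Rightarrow> complex \<Rightarrow> nat \<Rightarrow> complex \<times> complex \<times> complex \<times> complex \<times> complex" where
  "weighted_kernel_coeffs T N k =
     (0, 0, 0, (fact k)\<^sup>2 * of_nat (Suc k) * (N - of_nat (Suc k)) * T ^ k, (fact (Suc k))\<^sup>2 * T ^ Suc k)"

lemma kernel_coeffs_0: "kernel_coeffs T 0 = stage_step T N 0 (1, 0, 0, 0, 0)"
  by (simp add: kernel_coeffs_def)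

lemma kernel_coeffs_Suc: "kernel_coeffs T (Suc k) = stage_step T N (Suc k) (kernel_coeffs T k)"
  by (cases k) (simp_all add: kernel_coeffs_def algebra_simps power2_eq_square)

lemma weighted_kernel_coeffs_0: "weighted_kernel_coeffs T N 0 = stage_step T N 0 (0, 0, 0, 0, 1)"
  by (simp add: weighted_kernel_coeffs_def)

lemma weighted_kernel_coeffs_Suc:
  "weighted_kernel_coeffs T N (Suc k) = stage_step T N (Suc k) (weighted_kernel_coeffs T N k)"
  by (simp add: weighted_kernel_coeffs_def algebra_simps power2_eq_square)

lemma absE2_symbol_weight:
  "absE2_symbol 0 [((Suc m, Suc m, Suc m), (fact m)\<^sup>2)] (Y, X, c)
     = xyt_eval (stage (Suc m) (kernel_coeffs (1 - c) m)) (X, Y, S)"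
  by (cases m)
    (simp_all add: kernel_coeffs_def dX_def dY_def dS_def Let_def algebra_simps power2_eq_square)

lemma Lop_symbol_weight:
  "absE2_symbol 0 [((Suc m, Suc m, Suc m), (fact m)\<^sup>2)] (Y, X, c)
     - Lap_symbol S N [((Suc m, Suc m, Suc m), (fact m)\<^sup>2)] (Y, X, c)
     = xyt_eval (stage (Suc m) (weighted_kernel_coeffs (1 - c) N m)) (X, Y, S)"
  by (cases m)
    (simp_all add: weighted_kernel_coeffs_def dX_def dY_def dS_def Let_def algebra_simps power2_eq_square)

lemma kernel_eq_xyt_eval:
  "complex_of_real (1 / (cmod (1 - cinner z x))\<^sup>2) = xyt_eval (stage 0 (1, 0, 0, 0, 0)) (ker_coords z x)"
  by (simp only: of_real_divide of_real_1 of_real_power of_real_cmod_one_minus_cinner_power2)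
    (simp add: ker_coords_def kerX_def kerY_def)

lemma weighted_kernel_eq_xyt_eval:
  "complex_of_real ((1 - (norm x)\<^sup>2) / (cmod (1 - cinner z x))\<^sup>2)
     = xyt_eval (stage 0 (0, 0, 0, 0, 1)) (ker_coords z x)"
  by (simp only: of_real_divide of_real_diff of_real_1 of_real_power
      of_real_cmod_one_minus_cinner_power2 of_real_norm_power2_eq_cinner)
    (simp add: ker_coords_def kerX_def kerY_def)

lemma weight_eq_xyt_eval:
  "complex_of_real ((fact m)\<^sup>2 * (1 - (norm x)\<^sup>2) ^ (m + 1) / cmod (1 - cinner x \<xi>) ^ (2 * (m + 1)))
     = xyt_eval [((Suc m, Suc m, Suc m), (fact m)\<^sup>2)] (ker_coords \<xi> x)"
  by (simp only: of_real_divide of_real_mult of_real_power of_real_diff of_real_1 of_real_fact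
      power_mult of_real_cmod_one_minus_cinner_power2 of_real_norm_power2_eq_cinner)
    (simp add: ker_coords_def kerX_def kerY_def power_mult_distrib power_one_over)

theorem lemma2p1:
  fixes m :: nat and z \<xi> :: "complex^'n::finite"
  assumes "m \<ge> 1" and "norm z < 1" and "norm \<xi> < 1"
  shows "Lprod m (\<lambda>w. complex_of_real (1 / (cmod (1 - cinner z w))\<^sup>2)) \<xi>
           = absE2 0 (\<lambda>w. complex_of_real ((fact m)\<^sup>2 * (1 - (norm w)\<^sup>2) ^ (m + 1)
                         / cmod (1 - cinner w \<xi>) ^ (2 * (m + 1)))) z
       \<and> Lprod m (\<lambda>w. complex_of_real ((1 - (norm w)\<^sup>2) / (cmod (1 - cinner z w))\<^sup>2)) \<xi>
           = Lop 0 (\<lambda>w. complex_of_real ((fact m)\<^sup>2 * (1 - (norm w)\<^sup>2) ^ (m + 1)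
                         / cmod (1 - cinner w \<xi>) ^ (2 * (m + 1)))) z"
proof -
  let ?K = "\<lambda>w. complex_of_real (1 / (cmod (1 - cinner z w))\<^sup>2)"
  let ?W = "\<lambda>w. complex_of_real ((1 - (norm w)\<^sup>2) / (cmod (1 - cinner z w))\<^sup>2)"
  define F where "F = (\<lambda>w. complex_of_real ((fact m)\<^sup>2 * (1 - (norm w)\<^sup>2) ^ (m + 1)
                         / cmod (1 - cinner w \<xi>) ^ (2 * (m + 1))))"
  have F: "F x = xyt_eval [((Suc m, Suc m, Suc m), (fact m)\<^sup>2)] (ker_coords \<xi> x)" for x
    unfolding F_def by (rule weight_eq_xyt_eval)
  have \<xi>z: "cinner \<xi> z \<noteq> 1" "cinner z \<xi> \<noteq> 1"
    using cinner_neq_1 assms(2,3) by auto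
  have coords: "ker_coords \<xi> z = (kerY z \<xi>, kerX z \<xi>, cinner z z)"
    "ker_coords z \<xi> = (kerX z \<xi>, kerY z \<xi>, cinner \<xi> \<xi>)"
    by (simp_all add: ker_coords_def kerX_def kerY_def)
  have "Lprod m ?K \<xi> = xyt_eval (stage (Suc m) (kernel_coeffs (1 - cinner z z) m)) (ker_coords z \<xi>)"
    by (rule Lprod_stage[OF kernel_eq_xyt_eval kernel_coeffs_0 kernel_coeffs_Suc \<xi>z(1)])
  also have "\<dots> = absE2 0 F z"
    by (simp only: absE2_ker_coords[OF F \<xi>z(2)] coords absE2_symbol_weight[where S = "cinner \<xi> \<xi>"])
  finally have kernel: "Lprod m ?K \<xi> = absE2 0 F z" .
  have "Lprod m ?W \<xi> = xyt_eval (stage (Suc m)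
      (weighted_kernel_coeffs (1 - cinner z z) (of_nat CARD('n)) m)) (ker_coords z \<xi>)"
    by (rule Lprod_stage[OF weighted_kernel_eq_xyt_eval weighted_kernel_coeffs_0
          weighted_kernel_coeffs_Suc \<xi>z(1)])
  also have "\<dots> = Lop 0 F z"
    by (simp only: Lop_ker_coords[OF F \<xi>z(2)] coords Lop_symbol_weight)
  finally show ?thesis
    using kernel unfolding F_def by blast
qed

end
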